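(* Let $\alpha>0$, $\alpha\ne1$, let $U\in\mathcal{U}(d)$ and let $\Phi(Y)=UYU^\dagger$ be the corresponding unitary channel, with Choi state $\rho_\Phi=\frac1d\sum_{i,j=0}^{d-1}\Phi(|i\rangle\langle j|)\otimes|i\rangle\langle j|$ on $\mathbb{C}^d\otimes\mathbb{C}^d$. Then $H_\alpha(U)=\frac{1}{\alpha-1}\big(1-e^{-(\alpha-1)M_\alpha(\rho_\Phi)}\big)$.
   Context: Let $d_L\ge 2$, $n\ge1$, $d=d_L^n$, with computational basis $\{|i\rangle\}$ of $\mathbb{C}^d$. On $\mathbb{C}^{d_L}$ let $Z|k\rangle=\omega^k|k\rangle$, $X|k\rangle=|k+1\rangle$ (mod $d_L$), $\omega=e^{2\pi i/d_L}$, $\tau=-e^{i\pi/d_L}$, $D_{(a_1,a_2)}=\tau^{a_1a_2}X^{a_1}Z^{a_2}$, and for $\mathbf a=\mathbf a_1\oplus\cdots\oplus\mathbf a_n\in\mathbb{Z}_{d_L}^{2n}$ let $D_{\mathbf a}=D_{\mathbf a_1}\otimes\cdots\otimes D_{\mathbf a_n}$. The $\alpha$-Clifford entropy of $U$ is $H_\alpha(U)=\frac{1}{\alpha-1}\Big(1-\frac{1}{d^2}\sum_{\mathbf a,\mathbf b}\big|\tfrac1d\operatorname{tr}(D_{\mathbf a}^\dagger UD_{\mathbf b}U^\dagger)\big|^{2\alpha}\Big)$. For a pure state $\rho$ on $\mathbb{C}^d\otimes\mathbb{C}^d$, define $\chi_{\mathbf{ab}}(\rho)=\frac{1}{d^2}\big|\operatorname{tr}\big((D_{\mathbf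 a}^\dagger\otimes D_{\mathbf b}^\dagger)\rho\big)\big|^2$ (a probability distribution over $(\mathbf a,\mathbf b)$) and the (bipartite) stabilizer Rényi entropy $M_\alpha(\rho)=\frac{1}{1-\alpha}\ln\sum_{\mathbf a,\mathbf b}\chi_{\mathbf{ab}}(\rho)^\alpha-\ln(d^2)$. *)

theory Defs
  imports Complex_Main "HOL-Library.FuncSet"
begin

text \<open>Matrices on C^d are represented as functions nat => nat => complex, only
  the entries with indices < d being relevant.  Operators on C^d (x) C^d are
  functions on index pairs (p,q), p,q < d, with |p,q> = |p> (x) |q>.\<close>

definition mmult :: "nat \<Rightarrow> (nat \<Rightarrow> nat \<Rightarrow> complex) \<Rightarrow> (nat \<Rightarrow> nat \<Rightarrow> complex) \<Rightarrow> nat \<Rightarrow> nat \<Rightarrow> complex" where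
  "mmult d A B = (\<lambda>i j. \<Sum>k<d. A i k * B k j)"

definition madj :: "(nat \<Rightarrow> nat \<Rightarrow> complex) \<Rightarrow> nat \<Rightarrow> nat \<Rightarrow> complex" where
  "madj A = (\<lambda>i j. cnj (A j i))"

definition mtrace :: "nat \<Rightarrow> (nat \<Rightarrow> nat \<Rightarrow> complex) \<Rightarrow> complex" where
  "mtrace d A = (\<Sum>i<d. A i i)"

definition idm :: "nat \<Rightarrow> nat \<Rightarrow> complex" where
  "idm = (\<lambda>i j. if i = j then 1 else 0)"

definition unitary_mat :: "nat \<Rightarrow> (nat \<Rightarrow> nat \<Rightarrow> complex) \<Rightarrow> bool" where
  "unitary_mat d U \<longleftrightarrow>
     (\<forall>i<d. \<forall>j<d. mmult d U (madj U) i j = idm i j \<and> mmult d (madj U) U i j = idm i j)"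

definition ket_bra :: "nat \<Rightarrow> nat \<Rightarrow> nat \<Rightarrow> nat \<Rightarrow> complex" where
  "ket_bra i j = (\<lambda>x y. if x = i \<and> y = j then 1 else 0)"

definition unitary_channel :: "nat \<Rightarrow> (nat \<Rightarrow> nat \<Rightarrow> complex) \<Rightarrow> (nat \<Rightarrow> nat \<Rightarrow> complex) \<Rightarrow> nat \<Rightarrow> nat \<Rightarrow> complex" where
  "unitary_channel d U Y = mmult d (mmult d U Y) (madj U)"

definition tensor :: "(nat \<Rightarrow> nat \<Rightarrow> complex) \<Rightarrow> (nat \<Rightarrow> nat \<Rightarrow> complex) \<Rightarrow> nat \<times> nat \<Rightarrow> nat \<times> nat \<Rightarrow> complex" where
  "tensor A B = (\<lambda>(p,q) (p',q'). A p p' * B q q')"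

definition choi :: "nat \<Rightarrow> ((nat \<Rightarrow> nat \<Rightarrow> complex) \<Rightarrow> nat \<Rightarrow> nat \<Rightarrow> complex) \<Rightarrow> nat \<times> nat \<Rightarrow> nat \<times> nat \<Rightarrow> complex" where
  "choi d \<Phi> = (\<lambda>x y. (1 / of_nat d) * (\<Sum>i<d. \<Sum>j<d. tensor (\<Phi> (ket_bra i j)) (ket_bra i j) x y))"

definition mmult2 :: "nat \<Rightarrow> (nat \<times> nat \<Rightarrow> nat \<times> nat \<Rightarrow> complex) \<Rightarrow> (nat \<times> nat \<Rightarrow> nat \<times> nat \<Rightarrow> complex) \<Rightarrow> nat \<times> nat \<Rightarrow> nat \<times> nat \<Rightarrow> complex" where
  "mmult2 d A B = (\<lambda>x y. \<Sum>p<d. \<Sum>q<d. A x (p,q) * B (p,q) y)"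

definition mtrace2 :: "nat \<Rightarrow> (nat \<times> nat \<Rightarrow> nat \<times> nat \<Rightarrow> complex) \<Rightarrow> complex" where
  "mtrace2 d A = (\<Sum>p<d. \<Sum>q<d. A (p,q) (p,q))"

definition omega :: "nat \<Rightarrow> complex" where
  "omega dL = exp (2 * of_real pi * \<i> / of_nat dL)"

definition tau :: "nat \<Rightarrow> complex" where
  "tau dL = - exp (of_real pi * \<i> / of_nat dL)"

definition Xop :: "nat \<Rightarrow> nat \<Rightarrow> nat \<Rightarrow> complex" where
  "Xop dL = (\<lambda>x y. if x = (y + 1) mod dL then 1 else 0)"

definition Zop :: "nat \<Rightarrow> nat \<Rightarrow> nat \<Rightarrow> complex" where
  "Zop dL = (\<lambda>x y. if x = y then omega dL ^ y else 0)"

definition mpow :: "nat \<Rightarrow> (nat \<Rightarrow> nat \<Rightarrow> complex) \<Rightarrow> nat \<Rightarrow> nat \<Rightarrow> nat \<Rightarrow> complex" where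
  "mpow d A k = ((\<lambda>B. mmult d A B) ^^ k) idm"

definition D1 :: "nat \<Rightarrow> nat \<times> nat \<Rightarrow> nat \<Rightarrow> nat \<Rightarrow> complex" where
  "D1 dL a = (\<lambda>x y. tau dL ^ (fst a * snd a) *
      mmult dL (mpow dL (Xop dL) (fst a)) (mpow dL (Zop dL) (snd a)) x y)"

text \<open>Digit of the k-th tensor factor (factor 0 = most significant digit) of a
  basis index i < dL^n.\<close>
definition digit :: "nat \<Rightarrow> nat \<Rightarrow> nat \<Rightarrow> nat \<Rightarrow> nat" where
  "digit dL n k i = (i div dL ^ (n - 1 - k)) mod dL"

text \<open>Elements of Z_dL^{2n}: a = a_1 (+) ... (+) a_n with a_k in Z_dL^2.\<close>
definition pauli_labels :: "nat \<Rightarrow> nat \<Rightarrow> (nat \<Rightarrow> nat \<times> nat) set" where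
  "pauli_labels dL n = PiE {..<n} (\<lambda>_. {..<dL} \<times> {..<dL})"

definition Weyl :: "nat \<Rightarrow> nat \<Rightarrow> (nat \<Rightarrow> nat \<times> nat) \<Rightarrow> nat \<Rightarrow> nat \<Rightarrow> complex" where
  "Weyl dL n a = (\<lambda>i j. \<Prod>k<n. D1 dL (a k) (digit dL n k i) (digit dL n k j))"

definition clifford_entropy :: "nat \<Rightarrow> nat \<Rightarrow> real \<Rightarrow> (nat \<Rightarrow> nat \<Rightarrow> complex) \<Rightarrow> real" where
  "clifford_entropy dL n \<alpha> U =
     (let d = dL ^ n in
      1 / (\<alpha> - 1) * (1 - 1 / (real d)^2 *
        (\<Sum>a\<in>pauli_labels dL n. \<Sum>b\<in>pauli_labels dL n.
          cmod (1 / of_nat d * mtrace d (mmult d (madj (Weyl dL n a))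
             (mmult d U (mmult d (Weyl dL n b) (madj U))))) powr (2 * \<alpha>))))"

definition chi :: "nat \<Rightarrow> nat \<Rightarrow> (nat \<times> nat \<Rightarrow> nat \<times> nat \<Rightarrow> complex) \<Rightarrow> (nat \<Rightarrow> nat \<times> nat) \<Rightarrow> (nat \<Rightarrow> nat \<times> nat) \<Rightarrow> real" where
  "chi dL n \<rho> a b =
     (let d = dL ^ n in
      1 / (real d)^2 * (cmod (mtrace2 d (mmult2 d (tensor (madj (Weyl dL n a)) (madj (Weyl dL n b))) \<rho>)))^2)"

definition stab_renyi :: "nat \<Rightarrow> nat \<Rightarrow> real \<Rightarrow> (nat \<times> nat \<Rightarrow> nat \<times> nat \<Rightarrow> complex) \<Rightarrow> real" where
  "stab_renyi dL n \<alpha> \<rho> =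
     1 / (1 - \<alpha>) * ln (\<Sum>a\<in>pauli_labels dL n. \<Sum>b\<in>pauli_labels dL n. chi dL n \<rho> a b powr \<alpha>)
     - ln ((real (dL ^ n))^2)"

end

theory Submission
  imports Defs
begin

text \<open>The Choi state is the maximally entangled state rotated by \<open>U \<otimes> 1\<close>, and an operator
  on the second factor of the maximally entangled state can be moved to the first factor as its
  transpose; hence \<open>tr ((D_a^\<dagger> \<otimes> D_b^\<dagger>) \<rho>_\<Phi>) = tr (D_a^\<dagger> U conj(D_b) U^\<dagger>) / d\<close>.
  Entrywise conjugation maps \<open>D_b\<close> to a unimodular multiple of \<open>D_b'\<close>, where \<open>b'\<close> negates the
  \<open>Z\<close>-exponents of \<open>b\<close>. Since \<open>b \<mapsto> b'\<close> permutes the labels,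
  \<open>\<Sum> \<chi>_ab^\<alpha> = d^(-2\<alpha>) \<Sum> |tr (D_a^\<dagger> U D_b U^\<dagger>) / d|^(2\<alpha>)\<close>, and substituting this into \<open>M_\<alpha>\<close>
  turns \<open>exp (-(\<alpha> - 1) M_\<alpha>(\<rho>_\<Phi>))\<close> into \<open>d^(-2) \<Sum> |tr (D_a^\<dagger> U D_b U^\<dagger>) / d|^(2\<alpha>)\<close>; this sum is
  positive because its term for \<open>a = b = 0\<close> is 1.\<close>

lemma mpow_Suc: "mpow d A (Suc k) = mmult d A (mpow d A k)"
  by (simp add: mpow_def)

lemma mpow_Xop:
  assumes "x < dL" "y < dL"
  shows "mpow dL (Xop dL) k x y = (if x = (y + k) mod dL then 1 else 0)"
  using assms(1)
proof (induction k arbitrary: x)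
  case 0
  then show ?case using assms by (simp add: mpow_def idm_def)
next
  case (Suc k)
  have "mpow dL (Xop dL) (Suc k) x y
      = (\<Sum>m<dL. if m = (y + k) mod dL then Xop dL x m else 0)"
    unfolding mpow_Suc mmult_def by (intro sum.cong refl) (simp add: Suc.IH)
  also have "\<dots> = (if x = ((y + k) mod dL + 1) mod dL then 1 else 0)"
    using assms by (simp add: Xop_def)
  finally show ?case by (simp add: mod_Suc_eq)
qed

lemma mpow_Zop:
  assumes "x < dL" "y < dL"
  shows "mpow dL (Zop dL) k x y = (if x = y then omega dL ^ (k * y) else 0)"
  using assms(1)
proof (induction k arbitrary: x)
  case 0
  then show ?case using assms by (simp add: mpow_def idm_def)
next
  case (Suc k)
  have "mpow dL (Zop dL) (Suc k) x y
      = (\<Sum>m<dL. if m = y then Zop dL x m * omega dL ^ (k * y) else 0)"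
    unfolding mpow_Suc mmult_def by (intro sum.cong refl) (simp add: Suc.IH)
  also have "\<dots> = (if x = y then omega dL ^ (Suc k * y) else 0)"
    using assms by (simp add: Zop_def power_add)
  finally show ?case .
qed

lemma D1_apply:
  assumes "x < dL" "y < dL"
  shows "D1 dL a x y = tau dL ^ (fst a * snd a) *
     (if x = (y + fst a) mod dL then omega dL ^ (snd a * y) else 0)"
proof -
  have "mmult dL (mpow dL (Xop dL) (fst a)) (mpow dL (Zop dL) (snd a)) x y
     = (\<Sum>m<dL. if m = y then (if x = (y + fst a) mod dL then omega dL ^ (snd a * y) else 0) else 0)"
    unfolding mmult_def by (rule sum.cong) (auto simp: mpow_Xop mpow_Zop assms)
  then show ?thesis using assms by (simp add: D1_def)
qed

lemma norm_omega: "dL > 0 \<Longrightarrow> norm (omega dL) = 1"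
  by (simp add: omega_def norm_exp_eq_Re)

lemma norm_tau: "norm (tau dL) = 1"
  by (simp add: tau_def norm_exp_eq_Re)

lemma omega_power_self: "dL > 0 \<Longrightarrow> omega dL ^ dL = 1"
  by (simp add: omega_def exp_of_nat_mult[symmetric])

lemma cnj_omega_power:
  assumes "dL > 0" "c < dL"
  shows "cnj (omega dL ^ (c * y)) = omega dL ^ ((dL - c) mod dL * y)"
proof -
  have "dL dvd c + (dL - c) mod dL"
    using assms by (cases "c = 0") (auto simp: mod_if)
  then obtain m where "(c + (dL - c) mod dL) * y = dL * (m * y)"
    by (auto elim!: dvdE)
  then have "omega dL ^ (c * y) * omega dL ^ ((dL - c) mod dL * y) = (omega dL ^ dL) ^ (m * y)"
    by (metis add_mult_distrib power_add power_mult)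
  then have "omega dL ^ (c * y) * omega dL ^ ((dL - c) mod dL * y) = 1"
    by (simp add: omega_power_self[OF assms(1)])
  moreover have "norm (omega dL ^ (c * y)) = 1"
    using assms(1) by (simp add: norm_omega norm_power)
  then have "cnj (omega dL ^ (c * y)) * omega dL ^ (c * y) = 1"
    by (metis complex_norm_square mult.commute of_real_1 power_one)
  ultimately show ?thesis
    by (metis mult.assoc mult_1 mult.commute)
qed

definition conj_label :: "nat \<Rightarrow> nat \<times> nat \<Rightarrow> nat \<times> nat" where
  "conj_label dL a = (fst a, (dL - snd a) mod dL)"

definition conj_phase :: "nat \<Rightarrow> nat \<times> nat \<Rightarrow> complex" where
  "conj_phase dL a = cnj (tau dL) ^ (fst a * snd a) / tau dL ^ (fst a * snd (conj_label dL a))"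

definition conj_labels :: "nat \<Rightarrow> nat \<Rightarrow> (nat \<Rightarrow> nat \<times> nat) \<Rightarrow> nat \<Rightarrow> nat \<times> nat" where
  "conj_labels dL n b = restrict (\<lambda>k. conj_label dL (b k)) {..<n}"

lemma norm_conj_phase: "norm (conj_phase dL a) = 1"
  by (simp add: conj_phase_def norm_divide norm_power norm_tau)

lemma cnj_D1:
  assumes "x < dL" "y < dL" "snd a < dL"
  shows "cnj (D1 dL a x y) = conj_phase dL a * D1 dL (conj_label dL a) x y"
proof -
  have "tau dL \<noteq> 0"
    using norm_tau[of dL] by auto
  then show ?thesis
    using cnj_omega_power[of dL "snd a" y] assms
    by (simp add: D1_apply conj_phase_def conj_label_def)
qed

lemma cnj_Weyl:
  assumes "dL > 0" "b \<in> pauli_labels dL n"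
  shows "cnj (Weyl dL n b i j) = (\<Prod>k<n. conj_phase dL (b k)) * Weyl dL n (conj_labels dL n b) i j"
proof -
  have "cnj (Weyl dL n b i j) = (\<Prod>k<n. cnj (D1 dL (b k) (digit dL n k i) (digit dL n k j)))"
    by (simp add: Weyl_def cnj_prod)
  also have "\<dots> = (\<Prod>k<n. conj_phase dL (b k) * D1 dL (conj_labels dL n b k) (digit dL n k i) (digit dL n k j))"
  proof (rule prod.cong)
    fix k assume k: "k \<in> {..<n}"
    then have "b k \<in> {..<dL} \<times> {..<dL}"
      using assms(2) by (auto simp: pauli_labels_def)
    with k show "cnj (D1 dL (b k) (digit dL n k i) (digit dL n k j)) =
        conj_phase dL (b k) * D1 dL (conj_labels dL n b k) (digit dL n k i) (digit dL n k j)"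
      using assms(1) by (auto simp: cnj_D1 digit_def conj_labels_def)
  qed simp
  finally show ?thesis
    by (simp add: prod.distrib Weyl_def)
qed

lemma conj_label_conj_label: "a \<in> {..<dL} \<times> {..<dL} \<Longrightarrow> conj_label dL (conj_label dL a) = a"
  by (cases a) (auto simp: conj_label_def mod_if)

lemma bij_betw_conj_labels:
  assumes "dL > 0"
  shows "bij_betw (conj_labels dL n) (pauli_labels dL n) (pauli_labels dL n)"
proof -
  have involution: "\<forall>b\<in>pauli_labels dL n. conj_labels dL n (conj_labels dL n b) = b"
    by (auto simp: pauli_labels_def conj_labels_def PiE_def Pi_def extensional_def
        conj_label_conj_label)
  have into: "conj_labels dL n ` pauli_labels dL n \<subseteq> pauli_labels dL n"
    using assms by (auto simp: pauli_labels_def conj_labels_def conj_label_def PiE_def Pi_def)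
  show ?thesis
    by (rule bij_betw_byWitness[OF involution involution into into])
qed

lemma eq_if_base_digits_eq:
  fixes b i j :: nat
  assumes "b > 0" "i < b ^ n" "j < b ^ n" "\<forall>m<n. i div b ^ m mod b = j div b ^ m mod b"
  shows "i = j"
  using assms(2-)
proof (induction n arbitrary: i j)
  case 0
  then show ?case by simp
next
  case (Suc n)
  have "i div b < b ^ n" "j div b < b ^ n"
    using Suc.prems(1,2) by (simp_all add: less_mult_imp_div_less mult.commute)
  moreover have "\<forall>m<n. i div b div b ^ m mod b = j div b div b ^ m mod b"
  proof (intro allI impI)
    fix m assume "m < n"
    then have "i div b ^ Suc m mod b = j div b ^ Suc m mod b"
      using Suc.prems(3) by blast
    then show "i div b div b ^ m mod b = j div b div b ^ m mod b"
      by (simp add: div_mult2_eq)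
  qed
  ultimately have "i div b = j div b"
    by (rule Suc.IH)
  moreover have "i mod b = j mod b"
    using Suc.prems(3) by force
  ultimately show ?case
    by (metis div_mult_mod_eq)
qed

lemma eq_if_digit_eq:
  assumes "dL > 0" "i < dL ^ n" "j < dL ^ n" "\<forall>k<n. digit dL n k i = digit dL n k j"
  shows "i = j"
proof (rule eq_if_base_digits_eq[OF assms(1-3)], intro allI impI)
  fix m assume "m < n"
  then show "i div dL ^ m mod dL = j div dL ^ m mod dL"
    using assms(4)[rule_format, of "n - 1 - m"] by (simp add: digit_def)
qed

lemma Weyl_zero_label:
  assumes "dL > 0" "i < dL ^ n" "j < dL ^ n"
  shows "Weyl dL n (\<lambda>k\<in>{..<n}. (0, 0)) i j = idm i j"
proof -
  have "Weyl dL n (\<lambda>k\<in>{..<n}. (0, 0)) i j = (\<Prod>k<n. if digit dL n k i = digit dL n k j then 1 else 0)"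
    unfolding Weyl_def using assms(1) by (intro prod.cong) (auto simp: D1_apply digit_def)
  also have "\<dots> = idm i j"
    using eq_if_digit_eq[OF assms] by (auto simp: idm_def prod_zero)
  finally show ?thesis .
qed

lemma mmult_scale_left: "mmult d (\<lambda>i j. c * A i j) B = (\<lambda>i j. c * mmult d A B i j)"
  by (simp add: mmult_def sum_distrib_left mult.assoc)

lemma mmult_scale_right: "mmult d A (\<lambda>i j. c * B i j) = (\<lambda>i j. c * mmult d A B i j)"
  by (simp add: mmult_def sum_distrib_left mult.left_commute)

lemma mtrace_scale: "mtrace d (\<lambda>i j. c * A i j) = c * mtrace d A"
  by (simp add: mtrace_def sum_distrib_left)

lemma mmult_idm_on_left:
  assumes "\<And>i j. i < d \<Longrightarrow> j < d \<Longrightarrow> A i j = idm i j" "i < d"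
  shows "mmult d A B i j = B i j"
proof -
  have "mmult d A B i j = (\<Sum>k<d. if i = k then B k j else 0)"
    unfolding mmult_def using assms by (intro sum.cong) (auto simp: idm_def)
  then show ?thesis
    using assms(2) by simp
qed

lemma mtrace_unitary: "unitary_mat d U \<Longrightarrow> mtrace d (mmult d U (madj U)) = of_nat d"
  by (simp add: mtrace_def unitary_mat_def idm_def)

lemma unitary_channel_ket_bra:
  assumes "i < d" "j < d"
  shows "unitary_channel d U (ket_bra i j) p' p = U p' i * cnj (U p j)"
proof -
  have "mmult d U (ket_bra i j) p' m * cnj (U p m) = (if m = j then U p' i * cnj (U p j) else 0)" for m
    using assms(1) by (simp add: mmult_def ket_bra_def if_distrib[of "(*) _"] cong: if_cong)
  then show ?thesis
    using assms(2) by (simp add: unitary_channel_def mmult_def madj_def)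
qed

lemma choi_unitary_channel:
  assumes "q' < d" "q < d"
  shows "choi d (unitary_channel d U) (p', q') (p, q) = U p' q' * cnj (U p q) / of_nat d"
proof -
  have "(\<Sum>i<d. \<Sum>j<d. tensor (unitary_channel d U (ket_bra i j)) (ket_bra i j) (p', q') (p, q))
      = (\<Sum>i<d. \<Sum>j<d. if j = q then if i = q' then U p' q' * cnj (U p q) else 0 else 0)"
    by (intro sum.cong refl) (simp add: tensor_def unitary_channel_ket_bra, simp add: ket_bra_def)
  then show ?thesis
    using assms by (simp add: choi_def)
qed

lemma mtrace2_tensor_choi_unitary_channel:
  "mtrace2 d (mmult2 d (tensor (madj A) (madj B)) (choi d (unitary_channel d U)))
     = mtrace d (mmult d (madj A) (mmult d U (mmult d (\<lambda>l m. cnj (B l m)) (madj U)))) / of_nat d"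
proof -
  define F where "F p q p' q' = cnj (A p' p) * (U p' q' * (cnj (B q' q) * cnj (U p q))) / of_nat d"
    for p q p' q'
  have "mtrace2 d (mmult2 d (tensor (madj A) (madj B)) (choi d (unitary_channel d U)))
      = (\<Sum>p<d. \<Sum>q<d. \<Sum>p'<d. \<Sum>q'<d. F p q p' q')"
    unfolding mtrace2_def mmult2_def F_def
    by (intro sum.cong refl) (simp add: tensor_def madj_def choi_unitary_channel)
  also have "\<dots> = (\<Sum>p<d. \<Sum>p'<d. \<Sum>q<d. \<Sum>q'<d. F p q p' q')"
    by (intro sum.cong refl sum.swap)
  also have "\<dots> = (\<Sum>p<d. \<Sum>p'<d. \<Sum>q'<d. \<Sum>q<d. F p q p' q')"
    by (intro sum.cong refl sum.swap)
  also have "\<dots> = mtrace d (mmult d (madj A) (mmult d U (mmult d (\<lambda>l m. cnj (B l m)) (madj U)))) / of_nat d"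
    by (simp add: F_def mtrace_def mmult_def madj_def sum_distrib_left sum_divide_distrib)
  finally show ?thesis .
qed

definition weyl_transfer :: "nat \<Rightarrow> nat \<Rightarrow> (nat \<Rightarrow> nat \<Rightarrow> complex) \<Rightarrow>
    (nat \<Rightarrow> nat \<times> nat) \<Rightarrow> (nat \<Rightarrow> nat \<times> nat) \<Rightarrow> real" where
  "weyl_transfer dL n U a b =
     cmod (1 / of_nat (dL ^ n) * mtrace (dL ^ n) (mmult (dL ^ n) (madj (Weyl dL n a))
       (mmult (dL ^ n) U (mmult (dL ^ n) (Weyl dL n b) (madj U)))))"

lemma chi_choi_unitary_channel:
  assumes "dL > 0" "b \<in> pauli_labels dL n"
  shows "chi dL n (choi (dL ^ n) (unitary_channel (dL ^ n) U)) a b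
    = (weyl_transfer dL n U a (conj_labels dL n b))\<^sup>2 / (real (dL ^ n))\<^sup>2"
proof -
  define d where "d = dL ^ n"
  define \<theta> where "\<theta> = (\<Prod>k<n. conj_phase dL (b k))"
  define W where "W = Weyl dL n"
  have "(\<lambda>l m. cnj (W b l m)) = (\<lambda>l m. \<theta> * W (conj_labels dL n b) l m)"
    using assms by (simp add: W_def \<theta>_def cnj_Weyl)
  then have "mtrace2 d (mmult2 d (tensor (madj (W a)) (madj (W b))) (choi d (unitary_channel d U)))
    = \<theta> * mtrace d (mmult d (madj (W a)) (mmult d U (mmult d (W (conj_labels dL n b)) (madj U)))) / of_nat d"
    by (simp add: mtrace2_tensor_choi_unitary_channel mmult_scale_left mmult_scale_right mtrace_scale)
  moreover have "norm \<theta> = 1"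
    by (simp add: \<theta>_def prod_norm[symmetric] norm_conj_phase)
  ultimately show ?thesis
    by (simp add: chi_def Let_def weyl_transfer_def d_def W_def norm_mult norm_divide)
qed

lemma power2_powr: "(t::real) \<ge> 0 \<Longrightarrow> (t\<^sup>2) powr a = t powr (2 * a)"
  by (simp flip: powr_numeral add: powr_powr)

lemma sum_chi_choi_unitary_channel_powr:
  assumes "dL > 0"
  shows "(\<Sum>a\<in>pauli_labels dL n. \<Sum>b\<in>pauli_labels dL n.
            chi dL n (choi (dL ^ n) (unitary_channel (dL ^ n) U)) a b powr \<alpha>)
    = ((real (dL ^ n))\<^sup>2) powr (- \<alpha>) *
      (\<Sum>a\<in>pauli_labels dL n. \<Sum>b\<in>pauli_labels dL n. weyl_transfer dL n U a b powr (2 * \<alpha>))"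
proof -
  let ?P = "pauli_labels dL n" and ?D = "(real (dL ^ n))\<^sup>2"
  have "chi dL n (choi (dL ^ n) (unitary_channel (dL ^ n) U)) a b powr \<alpha>
      = ?D powr (- \<alpha>) * weyl_transfer dL n U a (conj_labels dL n b) powr (2 * \<alpha>)"
    if "b \<in> ?P" for a b
    using chi_choi_unitary_channel[OF assms that]
    by (simp add: powr_divide powr_minus_divide power2_powr weyl_transfer_def)
  then have "(\<Sum>a\<in>?P. \<Sum>b\<in>?P. chi dL n (choi (dL ^ n) (unitary_channel (dL ^ n) U)) a b powr \<alpha>)
      = (\<Sum>a\<in>?P. \<Sum>b\<in>?P. ?D powr (- \<alpha>) * weyl_transfer dL n U a (conj_labels dL n b) powr (2 * \<alpha>))"
    by (intro sum.cong) auto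
  also have "\<dots> = (\<Sum>a\<in>?P. \<Sum>b\<in>?P. ?D powr (- \<alpha>) * weyl_transfer dL n U a b powr (2 * \<alpha>))"
    by (intro sum.cong refl sum.reindex_bij_betw bij_betw_conj_labels assms)
  finally show ?thesis
    by (simp add: sum_distrib_left)
qed

lemma weyl_transfer_zero_label:
  assumes "dL > 0" "unitary_mat (dL ^ n) U"
  shows "weyl_transfer dL n U (\<lambda>k\<in>{..<n}. (0, 0)) (\<lambda>k\<in>{..<n}. (0, 0)) = 1"
proof -
  define d where "d = dL ^ n"
  define I where "I = Weyl dL n (\<lambda>k\<in>{..<n}. (0, 0))"
  have I: "I i j = idm i j" if "i < d" "j < d" for i j
    using that assms(1) by (simp add: I_def d_def Weyl_zero_label)
  then have adj_I: "madj I i j = idm i j" if "i < d" "j < d" for i j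
    using that by (simp add: madj_def idm_def)
  have "mmult d U (mmult d I (madj U)) = mmult d U (madj U)"
    unfolding mmult_def[of d U] by (simp add: mmult_idm_on_left[OF I])
  moreover have "mtrace d (mmult d (madj I) X) = mtrace d X" for X
    by (simp add: mtrace_def mmult_idm_on_left[OF adj_I])
  ultimately show ?thesis
    using assms(1) mtrace_unitary[OF assms(2)]
    by (simp add: weyl_transfer_def d_def I_def)
qed

lemma weyl_transfer_sum_powr_pos:
  assumes "dL > 0" "unitary_mat (dL ^ n) U"
  shows "0 < (\<Sum>a\<in>pauli_labels dL n. \<Sum>b\<in>pauli_labels dL n. weyl_transfer dL n U a b powr p)"
proof -
  let ?P = "pauli_labels dL n" and ?O = "\<lambda>k\<in>{..<n}. (0::nat, 0::nat)"
  have fin: "finite ?P"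
    by (simp add: pauli_labels_def finite_PiE)
  have O: "?O \<in> ?P"
    using assms(1) by (simp add: pauli_labels_def)
  have "0 < (\<Sum>b\<in>?P. weyl_transfer dL n U ?O b powr p)"
    by (rule sum_pos2[OF fin O]) (simp_all add: weyl_transfer_zero_label assms)
  then show ?thesis
    by (rule sum_pos2[OF fin O]) (simp add: sum_nonneg)
qed

lemma exp_rescaled_renyi:
  fixes S D \<alpha> :: real
  assumes "S > 0" "D > 0" "\<alpha> \<noteq> 1"
  shows "exp (- (\<alpha> - 1) * (1 / (1 - \<alpha>) * ln (D powr (- \<alpha>) * S) - ln D)) = S / D"
proof -
  have "- (\<alpha> - 1) * (1 / (1 - \<alpha>) * ln (D powr (- \<alpha>) * S) - ln D) = ln S - ln D"
    using assms by (simp add: ln_mult ln_powr field_simps)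
  then show ?thesis
    using assms by (simp add: exp_diff)
qed

theorem theorem4:
  fixes dL n :: nat and \<alpha> :: real and U :: "nat \<Rightarrow> nat \<Rightarrow> complex"
  assumes "dL \<ge> 2" and "n \<ge> 1" and "\<alpha> > 0" and "\<alpha> \<noteq> 1"
    and "unitary_mat (dL ^ n) U"
  shows "clifford_entropy dL n \<alpha> U =
    1 / (\<alpha> - 1) * (1 - exp (- (\<alpha> - 1) *
       stab_renyi dL n \<alpha> (choi (dL ^ n) (unitary_channel (dL ^ n) U))))"
proof -
  have dL: "dL > 0"
    using assms(1) by simp
  define S where "S = (\<Sum>a\<in>pauli_labels dL n. \<Sum>b\<in>pauli_labels dL n. weyl_transfer dL n U a b powr (2 * \<alpha>))"
  have "S > 0"
    unfolding S_def using dL assms(5) by (rule weyl_transfer_sum_powr_pos)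
  then have "exp (- (\<alpha> - 1) * stab_renyi dL n \<alpha> (choi (dL ^ n) (unitary_channel (dL ^ n) U)))
      = S / (real (dL ^ n))\<^sup>2"
    unfolding stab_renyi_def sum_chi_choi_unitary_channel_powr[OF dL] S_def[symmetric]
    using dL assms(4) by (intro exp_rescaled_renyi) simp_all
  then show ?thesis
    by (simp add: clifford_entropy_def Let_def S_def weyl_transfer_def)
qed

end
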